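(* Let $\mathcal{A}$ be a GVA over an infinite alphabet $\Sigma$ with $n$ variables and with set of constants $\Sigma_{\mathcal{A}}=\{c_1,\ldots,c_k\}$. Let $a_1,\ldots,a_n$ be pairwise distinct letters of $\Sigma\setminus\Sigma_{\mathcal{A}}$ and let $\boldsymbol{\Sigma}=\{a_1,\ldots,a_n,c_1,\ldots,c_k\}$. Then $L(\mathcal{A})\neq\emptyset$ if and only if $L(\mathcal{A})\cap\boldsymbol{\Sigma}^{\star}\neq\emptyset$.
   Context: A guard over a set of variables $\mathcal{X}$ (disjoint from $\Sigma$) is built by the grammar $g ::= \mathit{true} \mid \alpha=\beta \mid \alpha\neq\beta \mid g\wedge g$ with $\alpha,\beta\in\Sigma\cup\mathcal{X}$. A GVA is a tuple $\mathcal{A}=\langle\Sigma,\mathcal{X},Q,Q_0,\delta,F,\kappa\rangle$ where $\mathcal{X}$ is a finite set of variables (its number of variables is $|\mathcal{X}|$), $Q$ a finite set of states, $Q_0\subseteq Q$ the initial states, $F\subseteq Q$ the accepting states, $\delta$ a finite set of transitions $q\xrightarrow{\alpha,g}q'$ with $q,q'\in Q$, $\alpha\in\Sigma\cup\mathcal{X}\cup\{\varepsilon\}$ and $g$ a guard, and $\kappa:\mathcal{X}\to 2^{Q}$ the refreshing function ($\kappa(x)$ is the set of states in which $x$ is freed). The constants $\Sigma_{\mathcal{A}}$ of $\mathcal{A}$ are the (finitely many) letters of $\Sigma$ occurring in its transitions (labels or guards). A configuration is a pair $(\sigma,q)$ with $q\in Q$ and $\sigma$ a partial map $\mathcal{X}\to\Sigma$.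 There is a step $(\sigma,q)\xrightarrow{a}(\sigma',q')$, $a\in\Sigma\cup\{\varepsilon\}$, if there is a transition $q\xrightarrow{\alpha,g}q'$ and a map $\gamma$ from the variables occurring in $\alpha$ or $g$ that are not in $\mathrm{dom}(\sigma)$ to $\Sigma$ such that, with $\rho=\sigma\uplus\gamma$ (extended to be the identity on letters), $\rho$ satisfies $g$, $a=\rho(\alpha)$ if $\alpha\neq\varepsilon$ and $a=\varepsilon$ if $\alpha=\varepsilon$, and $\sigma'$ is the restriction of $\rho$ to $\{x\in\mathrm{dom}(\rho) : q'\notin\kappa(x)\}$. A word $w\in\Sigma^{\star}$ is accepted if there is a sequence of steps from $(\emptyset,q_0)$ with $q_0\in Q_0$ to some $(\sigma,q_f)$ with $q_f\in F$ whose labels concatenate to $w$; $L(\mathcal{A})$ is the set of accepted words. *)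

theory Defs
  imports Main
begin

datatype ('a, 'x) sym = Letter 'a | Var 'x

datatype ('a, 'x) guard =
    GTrue
  | GEq "('a, 'x) sym" "('a, 'x) sym"
  | GNeq "('a, 'x) sym" "('a, 'x) sym"
  | GAnd "('a, 'x) guard" "('a, 'x) guard"

text \<open>A GVA; a transition label is an optional symbol (None = epsilon).\<close>
record ('a, 'x, 'q) gva =
  vars :: "'x set"
  states :: "'q set"
  init :: "'q set"
  trans :: "('q \<times> ('a, 'x) sym option \<times> ('a, 'x) guard \<times> 'q) set"
  final :: "'q set"
  kappa :: "'x \<Rightarrow> 'q set"

fun sym_vars :: "('a, 'x) sym \<Rightarrow> 'x set" where
  "sym_vars (Letter a) = {}"
| "sym_vars (Var x) = {x}"

fun sym_letters :: "('a, 'x) sym \<Rightarrow> 'a set" where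
  "sym_letters (Letter a) = {a}"
| "sym_letters (Var x) = {}"

fun guard_vars :: "('a, 'x) guard \<Rightarrow> 'x set" where
  "guard_vars GTrue = {}"
| "guard_vars (GEq s t) = sym_vars s \<union> sym_vars t"
| "guard_vars (GNeq s t) = sym_vars s \<union> sym_vars t"
| "guard_vars (GAnd g h) = guard_vars g \<union> guard_vars h"

fun guard_letters :: "('a, 'x) guard \<Rightarrow> 'a set" where
  "guard_letters GTrue = {}"
| "guard_letters (GEq s t) = sym_letters s \<union> sym_letters t"
| "guard_letters (GNeq s t) = sym_letters s \<union> sym_letters t"
| "guard_letters (GAnd g h) = guard_letters g \<union> guard_letters h"

definition label_vars :: "('a, 'x) sym option \<Rightarrow> 'x set" where
  "label_vars l = (case l of None \<Rightarrow> {} | Some s \<Rightarrow> sym_vars s)"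

definition label_letters :: "('a, 'x) sym option \<Rightarrow> 'a set" where
  "label_letters l = (case l of None \<Rightarrow> {} | Some s \<Rightarrow> sym_letters s)"

definition wf_gva :: "('a, 'x, 'q) gva \<Rightarrow> bool" where
  "wf_gva A \<longleftrightarrow> finite (vars A) \<and> finite (states A) \<and> finite (trans A)
     \<and> init A \<subseteq> states A \<and> final A \<subseteq> states A
     \<and> (\<forall>x. kappa A x \<subseteq> states A)
     \<and> (\<forall>(q, l, g, q') \<in> trans A. q \<in> states A \<and> q' \<in> states A
          \<and> label_vars l \<subseteq> vars A \<and> guard_vars g \<subseteq> vars A)"

definition gva_consts :: "('a, 'x, 'q) gva \<Rightarrow> 'a set" where
  "gva_consts A = (\<Union>(q, l, g, q') \<in> trans A. label_letters l \<union> guard_letters g)"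

fun eval_sym :: "('x \<rightharpoonup> 'a) \<Rightarrow> ('a, 'x) sym \<Rightarrow> 'a option" where
  "eval_sym \<rho> (Letter a) = Some a"
| "eval_sym \<rho> (Var x) = \<rho> x"

fun sat :: "('x \<rightharpoonup> 'a) \<Rightarrow> ('a, 'x) guard \<Rightarrow> bool" where
  "sat \<rho> GTrue = True"
| "sat \<rho> (GEq s t) = (eval_sym \<rho> s \<noteq> None \<and> eval_sym \<rho> t \<noteq> None \<and> eval_sym \<rho> s = eval_sym \<rho> t)"
| "sat \<rho> (GNeq s t) = (eval_sym \<rho> s \<noteq> None \<and> eval_sym \<rho> t \<noteq> None \<and> eval_sym \<rho> s \<noteq> eval_sym \<rho> t)"
| "sat \<rho> (GAnd g h) = (sat \<rho> g \<and> sat \<rho> h)"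

type_synonym ('a, 'x, 'q) config = "('x \<rightharpoonup> 'a) \<times> 'q"

definition gva_step :: "('a, 'x, 'q) gva \<Rightarrow> ('a, 'x, 'q) config \<Rightarrow> 'a option
     \<Rightarrow> ('a, 'x, 'q) config \<Rightarrow> bool" where
  "gva_step A c a c' \<longleftrightarrow>
     (\<exists>l g \<gamma>. (snd c, l, g, snd c') \<in> trans A
        \<and> dom \<gamma> = (label_vars l \<union> guard_vars g) - dom (fst c)
        \<and> (let \<rho> = fst c ++ \<gamma> in
             sat \<rho> g
           \<and> a = (case l of None \<Rightarrow> None | Some s \<Rightarrow> eval_sym \<rho> s)
           \<and> fst c' = \<rho> |` {x \<in> dom \<rho>. snd c' \<notin> kappa A x}))"

definition opt_word :: "'a option \<Rightarrow> 'a list" where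
  "opt_word a = (case a of None \<Rightarrow> [] | Some b \<Rightarrow> [b])"

inductive gva_steps :: "('a, 'x, 'q) gva \<Rightarrow> ('a, 'x, 'q) config \<Rightarrow> 'a list
     \<Rightarrow> ('a, 'x, 'q) config \<Rightarrow> bool" for A where
  refl: "gva_steps A c [] c"
| step: "gva_step A c a c' \<Longrightarrow> gva_steps A c' w c'' \<Longrightarrow> gva_steps A c (opt_word a @ w) c''"

definition gva_lang :: "('a, 'x, 'q) gva \<Rightarrow> 'a list set" where
  "gva_lang A = {w. \<exists>q0 \<in> init A. \<exists>\<sigma> qf. qf \<in> final A \<and> gva_steps A (Map.empty, q0) w (\<sigma>, qf)}"

end

theory Submission
  imports Defs
begin

text \<open>A GVA only ever compares the letters stored in its variables with each other and with
its constants. Hence renaming letters by a map that fixes the constants and is injective on the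
letters currently stored turns a run into a run. Such renamings can be built along any run: a
valuation stores at most \<open>n = |\<X>|\<close> letters, so whenever a transition binds fresh letters,
enough of the \<open>n\<close> letters \<open>a\<^sub>i\<close> are unused by the renamed valuation to receive them
injectively. The renamed run then reads only the \<open>a\<^sub>i\<close> and the constants.\<close>

definition admissible_renaming :: "'a set \<Rightarrow> 'a set \<Rightarrow> 'a set \<Rightarrow> ('a \<Rightarrow> 'a) \<Rightarrow> bool" where
  "admissible_renaming P C V f \<longleftrightarrow> inj_on f (V \<union> C) \<and> (\<forall>c\<in>C. f c = c) \<and> f ` V \<subseteq> P \<union> C"

lemma admissible_renaming_subset:
  "admissible_renaming P C V f \<Longrightarrow> V' \<subseteq> V \<Longrightarrow> admissible_renaming P C V' f"
  unfolding admissible_renaming_def by (auto intro: inj_on_subset)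

lemma card_ran_le_card_dom: "finite (dom m) \<Longrightarrow> card (ran m) \<le> card (dom m)"
proof -
  assume "finite (dom m)"
  moreover have "ran m = (\<lambda>x. the (m x)) ` dom m"
    unfolding ran_def by force
  ultimately show ?thesis by (simp add: card_image_le)
qed

lemma admissible_renaming_extend:
  assumes "admissible_renaming P C R0 f" and "R0 \<subseteq> R" and "finite R"
    and "finite P" and "card R \<le> card P" and "P \<inter> C = {}"
  obtains f' where "admissible_renaming P C R f'" and "\<forall>x\<in>R0. f' x = f x"
proof -
  have inj: "inj_on f (R0 \<union> C)" and fixed: "\<forall>c\<in>C. f c = c" and img: "f ` R0 \<subseteq> P \<union> C"
    using assms(1) unfolding admissible_renaming_def by auto
  define X where "X = R - R0 - C"
  define T where "T = P - f ` R0"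
  have "P \<inter> f ` R0 \<subseteq> f ` (R0 - C)"
    using fixed assms(6) by (auto simp: image_iff) (metis DiffI IntI empty_iff)
  then have "card (P \<inter> f ` R0) \<le> card (R0 - C)"
    using assms(2,3) by (meson card_image_le card_mono finite_Diff finite_subset finite_imageI le_trans)
  moreover have "card X + card (R0 - C) \<le> card R"
    using assms(2,3) unfolding X_def
    by (subst card_Un_disjoint[symmetric]) (auto intro!: card_mono elim: finite_subset)
  ultimately have "card X \<le> card T"
    using assms(4,5) unfolding T_def by (simp add: card_Diff_subset_Int Int_commute)
  then obtain g where g: "g ` X \<subseteq> T" "inj_on g X"
    using card_le_inj[of X T] assms(3,4) unfolding X_def T_def by auto
  define f' where "f' x = (if x \<in> X then g x else f x)" for x
  have "f' ` X \<subseteq> T" and "f' ` (R0 \<union> C) \<subseteq> f ` R0 \<union> C"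
    using g(1) fixed unfolding f'_def X_def by auto
  then have "f' ` (R0 \<union> C) \<inter> f' ` X = {}"
    using assms(6) unfolding T_def by blast
  moreover have "R \<union> C = (R0 \<union> C) \<union> X"
    using assms(2) unfolding X_def by auto
  moreover have "inj_on f' (R0 \<union> C)"
    using inj unfolding f'_def X_def inj_on_def by auto
  moreover have "inj_on f' X"
    using g(2) unfolding f'_def inj_on_def by auto
  moreover have "(R0 \<union> C) - X = R0 \<union> C" and "X - (R0 \<union> C) = X"
    unfolding X_def by auto
  ultimately have "inj_on f' (R \<union> C)"
    by (simp add: inj_on_Un)
  moreover have "f' ` R \<subseteq> P \<union> C"
    using g(1) fixed img unfolding f'_def X_def T_def by auto
  moreover have "\<forall>c\<in>C. f' c = c"
    using fixed unfolding f'_def X_def by auto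
  moreover have "\<forall>x\<in>R0. f' x = f x"
    unfolding f'_def X_def by auto
  ultimately show ?thesis
    using that unfolding admissible_renaming_def by blast
qed

lemma eval_sym_rename:
  assumes "sym_letters s \<subseteq> C" and "\<forall>c\<in>C. f c = c"
  shows "eval_sym (map_option f \<circ> \<rho>) s = map_option f (eval_sym \<rho> s)"
  using assms by (cases s) auto

lemma eval_sym_in_ran: "eval_sym \<rho> s = Some v \<Longrightarrow> v \<in> ran \<rho> \<union> sym_letters s"
  by (cases s) (auto simp: ran_def)

lemma sat_rename:
  assumes "sat \<rho> g" and "guard_letters g \<subseteq> C" and "\<forall>c\<in>C. f c = c"
    and "inj_on f (ran \<rho> \<union> C)"
  shows "sat (map_option f \<circ> \<rho>) g"
  using assms
proof (induction g)
  case (GEq s t)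
  then show ?case
    using eval_sym_rename[of s C f \<rho>, unfolded comp_def]
      eval_sym_rename[of t C f \<rho>, unfolded comp_def] by auto
next
  case (GNeq s t)
  then obtain u v where uv: "eval_sym \<rho> s = Some u" "eval_sym \<rho> t = Some v" "u \<noteq> v"
    by auto
  with GNeq.prems(2) have "u \<in> ran \<rho> \<union> C" and "v \<in> ran \<rho> \<union> C"
    using eval_sym_in_ran by fastforce+
  with uv(3) GNeq.prems(4) have "f u \<noteq> f v"
    by (meson inj_on_contraD)
  with GNeq.prems uv show ?case
    using eval_sym_rename[of s C f \<rho>, unfolded comp_def]
      eval_sym_rename[of t C f \<rho>, unfolded comp_def] by auto
qed auto

lemma map_add_rename: "map_option f \<circ> (\<sigma> ++ \<gamma>) = (map_option f \<circ> \<sigma>) ++ (map_option f \<circ> \<gamma>)"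
  by (rule ext) (auto simp: map_add_def split: option.splits)

lemma restrict_map_rename: "(map_option f \<circ> \<rho>) |` D = map_option f \<circ> (\<rho> |` D)"
  by (rule ext) (auto simp: restrict_map_def)

lemma rename_cong: "\<forall>v\<in>ran \<sigma>. f' v = f v \<Longrightarrow> map_option f' \<circ> \<sigma> = map_option f \<circ> \<sigma>"
proof
  fix x
  assume "\<forall>v\<in>ran \<sigma>. f' v = f v"
  then show "(map_option f' \<circ> \<sigma>) x = (map_option f \<circ> \<sigma>) x"
    by (cases "\<sigma> x") (auto simp: ran_def)
qed

lemma gva_step_rename:
  assumes "(q, l, g, q') \<in> trans A" and "dom \<gamma> = label_vars l \<union> guard_vars g - dom \<sigma>"
    and "sat (\<sigma> ++ \<gamma>) g" and "b = (case l of None \<Rightarrow> None | Some s \<Rightarrow> eval_sym (\<sigma> ++ \<gamma>) s)"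
    and "inj_on f (ran (\<sigma> ++ \<gamma>) \<union> gva_consts A)" and "\<forall>c\<in>gva_consts A. f c = c"
  shows "gva_step A (map_option f \<circ> \<sigma>, q) (map_option f b)
           (map_option f \<circ> ((\<sigma> ++ \<gamma>) |` {x \<in> dom (\<sigma> ++ \<gamma>). q' \<notin> kappa A x}), q')"
proof -
  have letters: "label_letters l \<subseteq> gva_consts A" "guard_letters g \<subseteq> gva_consts A"
    using assms(1) unfolding gva_consts_def by blast+
  have "sat (map_option f \<circ> (\<sigma> ++ \<gamma>)) g"
    using sat_rename[OF assms(3) letters(2) assms(6,5)] .
  moreover have "map_option f b
      = (case l of None \<Rightarrow> None | Some s \<Rightarrow> eval_sym (map_option f \<circ> (\<sigma> ++ \<gamma>)) s)"
    using letters(1) assms(4,6) by (auto simp: label_letters_def eval_sym_rename split: option.split)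
  ultimately show ?thesis
    unfolding gva_step_def using assms(1,2)
    by (intro exI[of _ l] exI[of _ g] exI[of _ "map_option f \<circ> \<gamma>"])
      (simp add: Let_def map_add_rename[symmetric] restrict_map_rename)
qed

lemma gva_step_rename_into:
  assumes "gva_step A (\<sigma>, q) b (\<sigma>1, q1)" and "wf_gva A"
    and "finite P" and "card (vars A) \<le> card P" and "P \<inter> gva_consts A = {}"
    and "dom \<sigma> \<subseteq> vars A" and "admissible_renaming P (gva_consts A) (ran \<sigma>) f"
  obtains f'
  where "gva_step A (map_option f \<circ> \<sigma>, q) (map_option f' b) (map_option f' \<circ> \<sigma>1, q1)"
    and "opt_word (map_option f' b) \<in> lists (P \<union> gva_consts A)"
    and "dom \<sigma>1 \<subseteq> vars A" and "admissible_renaming P (gva_consts A) (ran \<sigma>1) f'"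
proof -
  let ?C = "gva_consts A"
  obtain l g \<gamma> where tr: "(q, l, g, q1) \<in> trans A"
    and dom_\<gamma>: "dom \<gamma> = label_vars l \<union> guard_vars g - dom \<sigma>" and sat: "sat (\<sigma> ++ \<gamma>) g"
    and b: "b = (case l of None \<Rightarrow> None | Some s \<Rightarrow> eval_sym (\<sigma> ++ \<gamma>) s)"
    and \<sigma>1: "\<sigma>1 = (\<sigma> ++ \<gamma>) |` {x \<in> dom (\<sigma> ++ \<gamma>). q1 \<notin> kappa A x}"
    using assms(1) unfolding gva_step_def fst_conv snd_conv Let_def by blast
  define \<rho> where "\<rho> = \<sigma> ++ \<gamma>"
  have dom_\<rho>: "dom \<rho> \<subseteq> vars A"
    using assms(2,6) tr dom_\<gamma> unfolding \<rho>_def wf_gva_def by fastforce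
  have fin_vars: "finite (vars A)"
    using assms(2) unfolding wf_gva_def by blast
  then have fin_dom_\<rho>: "finite (dom \<rho>)"
    using dom_\<rho> finite_subset by blast
  have "card (ran \<rho>) \<le> card P"
    using card_ran_le_card_dom[OF fin_dom_\<rho>] card_mono[OF fin_vars dom_\<rho>] assms(4) by linarith
  moreover have "ran \<sigma> \<subseteq> ran \<rho>"
    using ran_map_add[of \<sigma> \<gamma>] dom_\<gamma> unfolding \<rho>_def by auto
  ultimately obtain f' where f': "admissible_renaming P ?C (ran \<rho>) f'" "\<forall>v\<in>ran \<sigma>. f' v = f v"
    using admissible_renaming_extend[OF assms(7) _ finite_ran[OF fin_dom_\<rho>] assms(3) _ assms(5)]
    by blast
  have inj: "inj_on f' (ran \<rho> \<union> ?C)" and fixed: "\<forall>c\<in>?C. f' c = c"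
    and img: "f' ` ran \<rho> \<subseteq> P \<union> ?C"
    using f'(1) unfolding admissible_renaming_def by auto
  have ran_\<sigma>1: "ran \<sigma>1 \<subseteq> ran \<rho>"
    unfolding \<sigma>1 \<rho>_def[symmetric] by (auto simp: ran_def restrict_map_def)
  have "gva_step A (map_option f \<circ> \<sigma>, q) (map_option f' b) (map_option f' \<circ> \<sigma>1, q1)"
    using gva_step_rename[OF tr dom_\<gamma> sat b inj[unfolded \<rho>_def] fixed] rename_cong[OF f'(2)]
    unfolding \<sigma>1 by simp
  moreover have "opt_word (map_option f' b) \<in> lists (P \<union> ?C)"
  proof (cases b)
    case (Some v)
    then obtain s where "l = Some s" and "eval_sym \<rho> s = Some v"
      using b unfolding \<rho>_def by (cases l) auto
    moreover have "sym_letters s \<subseteq> ?C"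
      using tr \<open>l = Some s\<close> unfolding gva_consts_def label_letters_def by force
    ultimately have "v \<in> ran \<rho> \<union> ?C"
      using eval_sym_in_ran by fastforce
    then show ?thesis
      using Some fixed img by (auto simp: opt_word_def)
  qed (simp add: opt_word_def)
  moreover have "dom \<sigma>1 \<subseteq> vars A"
    using dom_\<rho> unfolding \<sigma>1 \<rho>_def[symmetric] by auto
  moreover have "admissible_renaming P ?C (ran \<sigma>1) f'"
    using admissible_renaming_subset[OF f'(1) ran_\<sigma>1] .
  ultimately show ?thesis
    using that by blast
qed

lemma gva_steps_rename_into:
  assumes "gva_steps A c w c'" and "wf_gva A"
    and "finite P" and "card (vars A) \<le> card P" and "P \<inter> gva_consts A = {}"
    and "dom (fst c) \<subseteq> vars A" and "admissible_renaming P (gva_consts A) (ran (fst c)) f"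
  shows "\<exists>w' \<sigma>'. w' \<in> lists (P \<union> gva_consts A)
           \<and> gva_steps A (map_option f \<circ> fst c, snd c) w' (\<sigma>', snd c')"
  using assms(1,6,7)
proof (induction arbitrary: f rule: gva_steps.induct)
  case (refl c)
  show ?case
    using gva_steps.refl by blast
next
  case (step c b c1 w c2)
  obtain \<sigma> q \<sigma>1 q1 where c: "c = (\<sigma>, q)" and c1: "c1 = (\<sigma>1, q1)"
    by fastforce
  obtain f' where
    step': "gva_step A (map_option f \<circ> \<sigma>, q) (map_option f' b) (map_option f' \<circ> \<sigma>1, q1)"
    and word: "opt_word (map_option f' b) \<in> lists (P \<union> gva_consts A)"
    and "dom \<sigma>1 \<subseteq> vars A" and "admissible_renaming P (gva_consts A) (ran \<sigma>1) f'"
    using gva_step_rename_into[OF step.hyps(1)[unfolded c c1] assms(2-5)] step.prems c by auto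
  then obtain w' \<sigma>' where "w' \<in> lists (P \<union> gva_consts A)"
    and "gva_steps A (map_option f' \<circ> \<sigma>1, q1) w' (\<sigma>', snd c2)"
    using step.IH[of f'] unfolding c1 fst_conv snd_conv by blast
  with step' word show ?case
    unfolding c fst_conv snd_conv by (meson append_in_lists_conv gva_steps.step)
qed

theorem mainTheorem4:
  fixes A :: "('a, 'x, 'q) gva" and n :: nat and a :: "nat \<Rightarrow> 'a"
  assumes "infinite (UNIV :: 'a set)"
    and "wf_gva A"
    and "n = card (vars A)"
    and "inj_on a {..<n}"
    and "a ` {..<n} \<inter> gva_consts A = {}"
  shows "gva_lang A \<noteq> {} \<longleftrightarrow> gva_lang A \<inter> lists (a ` {..<n} \<union> gva_consts A) \<noteq> {}"
proof
  assume "gva_lang A \<noteq> {}"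
  then obtain w q0 \<sigma> qf where "q0 \<in> init A" and "qf \<in> final A"
    and run: "gva_steps A (Map.empty, q0) w (\<sigma>, qf)"
    unfolding gva_lang_def by blast
  have "card (vars A) \<le> card (a ` {..<n})"
    using assms(3,4) by (simp add: card_image)
  then obtain w' \<sigma>' where "w' \<in> lists (a ` {..<n} \<union> gva_consts A)"
    and "gva_steps A (Map.empty, q0) w' (\<sigma>', qf)"
    using gva_steps_rename_into[OF run assms(2) _ _ assms(5), of id]
    by (auto simp: admissible_renaming_def)
  with \<open>q0 \<in> init A\<close> \<open>qf \<in> final A\<close>
  show "gva_lang A \<inter> lists (a ` {..<n} \<union> gva_consts A) \<noteq> {}"
    unfolding gva_lang_def by blast
qed auto

end
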